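(* Let $\Delta$ be a finite set with $|\Delta|\ge2$, $\ell\ge2$, $\Omega=\Delta^\ell$, $W=\mathrm{Sym}\,\Delta\wr S_\ell$ in product action on $\Omega$, $G\le W$, and let $M=T_1\times\cdots\times T_k$ be a minimal normal subgroup of $G$ transitive on $\Omega$, with the $T_i$ isomorphic non-abelian finite simple groups. Let $T$ be a simple factor of $M$ (one of the $T_i$), and let $j_1,\dots,j_s$ be distinct indices in $\{1,\dots,\ell\}$ such that $T\le M^{(j_r)}$ for each $r$. Let $\delta\in\Delta$, put $\omega=(\delta,\dots,\delta)\in\Omega$, and for $r\in\{1,\dots,s\}$ let $A_r=(M^{(j_r)})_\delta\overline T/\overline T\le T$. Then $$A_r\Big(\bigcap_{i\ne r}A_i\Big)=T\ \text{ for all } r,\qquad\text{and}\qquad M_\omega\overline T/\overline T\le\bigcap_{r=1}^{s}A_r.$$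
   Context: Product action: $(\delta_1,\dots,\delta_\ell)^{(g_1,\dots,g_\ell)h}=(\delta_{1h^{-1}}g_{1h^{-1}},\dots,\delta_{\ell h^{-1}}g_{\ell h^{-1}})$ for $g_i\in\mathrm{Sym}\,\Delta$, $h\in S_\ell$. Let $\pi:W\to S_\ell$ be the natural projection; for $j\in\{1,\dots,\ell\}$ let $W_j$ be the stabiliser of $j$ under $\pi$, so $W_j=\mathrm{Sym}\,\Delta\times(\mathrm{Sym}\,\Delta\wr S_{\ell-1})$ with the first factor acting on the $j$-th coordinate. For $H\le W$ the $j$-th component $H^{(j)}$ is the projection of $H\cap W_j$ to the first factor. One has $M\le(\mathrm{Sym}\,\Delta)^\ell$, and $M^{(j)}$ is a quotient of $M$ which is identified with the direct product of those $T_i$ not contained in the kernel of $M\to M^{(j)}$; "$T\le M^{(j)}$" refers to this identification, and $(M^{(j)})_\delta$ (stabiliser of $\delta$ in $M^{(j)}$ acting on $\Delta$) is viewed as a subgroup of $M$. $\overline T=C_M(T)$, so $M=T\times\overline T$, and for $H\le M$ the quotient $H\overline T/\overline T$ is identified with the projection of $H$ into $T$. $M_\omega$ is the stabiliser of $\omega$ in $M$. An empty intersection of subgroups of $T$ is $T$. *)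

theory Defs
  imports "HOL-Algebra.Algebra" "HOL-Combinatorics.Permutations"
begin

definition prod_space :: "nat \<Rightarrow> 'd set \<Rightarrow> (nat \<Rightarrow> 'd) set" where
  "prod_space l D = PiE {1..l} (\<lambda>_. D)"

definition wr_data :: "nat \<Rightarrow> 'd set \<Rightarrow> ((nat \<Rightarrow> 'd \<Rightarrow> 'd) \<times> (nat \<Rightarrow> nat)) set" where
  "wr_data l D = {(g, h). (\<forall>i\<in>{1..l}. bij_betw (g i) D D) \<and> h permutes {1..l}}"

text \<open>(d_1,...,d_l)^((g_1,...,g_l)h) = (d_{1h^-1} g_{1h^-1}, ..., d_{lh^-1} g_{lh^-1}).\<close>
definition wr_perm :: "nat \<Rightarrow> 'd set \<Rightarrow> (nat \<Rightarrow> 'd \<Rightarrow> 'd) \<Rightarrow> (nat \<Rightarrow> nat)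
    \<Rightarrow> (nat \<Rightarrow> 'd) \<Rightarrow> (nat \<Rightarrow> 'd)" where
  "wr_perm l D g h = (\<lambda>x\<in>prod_space l D. \<lambda>i\<in>{1..l}. g (inv_into UNIV h i) (x (inv_into UNIV h i)))"

definition wreath :: "nat \<Rightarrow> 'd set \<Rightarrow> ((nat \<Rightarrow> 'd) \<Rightarrow> (nat \<Rightarrow> 'd)) set" where
  "wreath l D = {wr_perm l D g h | g h. (g, h) \<in> wr_data l D}"

text \<open>The natural projection pi : W -> S_l (well defined since |D| >= 2).\<close>
definition wr_proj :: "nat \<Rightarrow> 'd set \<Rightarrow> ((nat \<Rightarrow> 'd) \<Rightarrow> (nat \<Rightarrow> 'd)) \<Rightarrow> (nat \<Rightarrow> nat)" where
  "wr_proj l D w = (THE h. \<exists>g. (g, h) \<in> wr_data l D \<and> w = wr_perm l D g h)"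

definition wr_base :: "nat \<Rightarrow> 'd set \<Rightarrow> ((nat \<Rightarrow> 'd) \<Rightarrow> (nat \<Rightarrow> 'd)) set" where
  "wr_base l D = {w \<in> wreath l D. wr_proj l D w = id}"

definition wr_stab :: "nat \<Rightarrow> 'd set \<Rightarrow> nat \<Rightarrow> ((nat \<Rightarrow> 'd) \<Rightarrow> (nat \<Rightarrow> 'd)) set" where
  "wr_stab l D j = {w \<in> wreath l D. wr_proj l D w j = j}"

text \<open>For w in W_j, the permutation of D acting on the j-th coordinate (first factor of W_j).\<close>
definition wr_coord :: "nat \<Rightarrow> 'd set \<Rightarrow> nat \<Rightarrow> ((nat \<Rightarrow> 'd) \<Rightarrow> (nat \<Rightarrow> 'd)) \<Rightarrow> ('d \<Rightarrow> 'd)" where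
  "wr_coord l D j w = (\<lambda>d\<in>D. w (\<lambda>i\<in>{1..l}. d) j)"

definition component :: "nat \<Rightarrow> 'd set \<Rightarrow> ((nat \<Rightarrow> 'd) \<Rightarrow> (nat \<Rightarrow> 'd)) set \<Rightarrow> nat \<Rightarrow> ('d \<Rightarrow> 'd) set" where
  "component l D H j = wr_coord l D j ` (H \<inter> wr_stab l D j)"

definition component_kernel :: "nat \<Rightarrow> 'd set \<Rightarrow> ((nat \<Rightarrow> 'd) \<Rightarrow> (nat \<Rightarrow> 'd)) set \<Rightarrow> nat
    \<Rightarrow> ((nat \<Rightarrow> 'd) \<Rightarrow> (nat \<Rightarrow> 'd)) set" where
  "component_kernel l D H j = {w \<in> H \<inter> wr_stab l D j. wr_coord l D j w = (\<lambda>d\<in>D. d)}"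

text \<open>Preimage in H of the point stabiliser (H^(j))_delta.\<close>
definition component_stab_preimage :: "nat \<Rightarrow> 'd set \<Rightarrow> ((nat \<Rightarrow> 'd) \<Rightarrow> (nat \<Rightarrow> 'd)) set \<Rightarrow> nat \<Rightarrow> 'd
    \<Rightarrow> ((nat \<Rightarrow> 'd) \<Rightarrow> (nat \<Rightarrow> 'd)) set" where
  "component_stab_preimage l D H j \<delta> = {w \<in> H \<inter> wr_stab l D j. wr_coord l D j w \<delta> = \<delta>}"

definition internal_dirprod :: "('a, 'b) monoid_scheme \<Rightarrow> 'a set \<Rightarrow> nat \<Rightarrow> (nat \<Rightarrow> 'a set) \<Rightarrow> bool" where
  "internal_dirprod Gr M k Tf \<longleftrightarrow>
     (\<forall>i<k. Tf i \<lhd> Gr\<lparr>carrier := M\<rparr>) \<and>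
     generate Gr (\<Union>i<k. Tf i) = M \<and>
     (\<forall>i<k. Tf i \<inter> generate Gr (\<Union>j\<in>{..<k} - {i}. Tf j) = {\<one>\<^bsub>Gr\<^esub>})"

definition minimal_normal :: "('a, 'b) monoid_scheme \<Rightarrow> 'a set \<Rightarrow> bool" where
  "minimal_normal Gr M \<longleftrightarrow> M \<lhd> Gr \<and> M \<noteq> {\<one>\<^bsub>Gr\<^esub>} \<and>
     (\<forall>N. N \<lhd> Gr \<and> N \<subseteq> M \<longrightarrow> N = {\<one>\<^bsub>Gr\<^esub>} \<or> N = M)"

definition centralizer_in :: "('a, 'b) monoid_scheme \<Rightarrow> 'a set \<Rightarrow> 'a set \<Rightarrow> 'a set" where
  "centralizer_in Gr M T = {m \<in> M. \<forall>t\<in>T. m \<otimes>\<^bsub>Gr\<^esub> t = t \<otimes>\<^bsub>Gr\<^esub> m}"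

text \<open>For M = T x Tbar, the projection of H <= M into T, i.e. H Tbar / Tbar identified with a subgroup of T.\<close>
definition proj_factor :: "('a, 'b) monoid_scheme \<Rightarrow> 'a set \<Rightarrow> 'a set \<Rightarrow> 'a set \<Rightarrow> 'a set" where
  "proj_factor Gr T Tbar H = {t \<in> T. \<exists>h\<in>H. \<exists>u\<in>Tbar. h = t \<otimes>\<^bsub>Gr\<^esub> u}"

end

theory Submission
  imports Defs
begin

text \<open>
  Write \<open>M = T \<times> N\<close> with \<open>N\<close> the product of the remaining simple factors. Since \<open>N\<close>
  centralises \<open>T\<close>, projecting to \<open>T\<close> along \<open>N\<close> is multiplicative on subsets of \<open>M\<close>.
  The elements of \<open>M\<close> lie in the base group and so act coordinatewise; with transitivity this
  lets every \<open>m \<in> M\<close> be written as \<open>a b\<close>, where \<open>a\<close> fixes the \<open>j r\<close>-th coordinate of \<open>\<omega>\<close>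
  and \<open>b\<close> fixes all its other coordinates. Projecting these factorisations of the elements of
  \<open>T\<close> gives the factorisation of \<open>T\<close>, and an element fixing \<open>\<omega>\<close> fixes each of its
  coordinates, which gives the inclusion.
\<close>

lemma (in group) subgroup_centralizer_in:
  assumes "subgroup M G" and "T \<subseteq> carrier G"
  shows "subgroup (centralizer_in G M T) G"
proof (rule subgroupI)
  have MG: "M \<subseteq> carrier G" using assms(1) subgroup.subset by blast
  show "centralizer_in G M T \<subseteq> carrier G"
    unfolding centralizer_in_def using MG by blast
  show "centralizer_in G M T \<noteq> {}"
    unfolding centralizer_in_def using subgroup.one_closed[OF assms(1)] assms(2) by (auto intro!: exI[of _ \<one>])
  show "inv m \<in> centralizer_in G M T" if "m \<in> centralizer_in G M T" for m
  proof -
    have m: "m \<in> M" "\<forall>t\<in>T. m \<otimes> t = t \<otimes> m" using that unfolding centralizer_in_def by auto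
    have "inv m \<otimes> t = t \<otimes> inv m" if t: "t \<in> T" for t
    proof -
      have "m \<in> carrier G" "t \<in> carrier G" using m(1) t MG assms(2) by auto
      then have "inv m \<otimes> t = inv m \<otimes> (t \<otimes> m) \<otimes> inv m" by (simp add: m_assoc)
      also have "\<dots> = inv m \<otimes> (m \<otimes> t) \<otimes> inv m" using m(2) t by simp
      also have "\<dots> = t \<otimes> inv m" using \<open>m \<in> carrier G\<close> \<open>t \<in> carrier G\<close>
        by (simp add: m_assoc[symmetric])
      finally show ?thesis .
    qed
    then show ?thesis unfolding centralizer_in_def using subgroup.m_inv_closed[OF assms(1) m(1)] by blast
  qed
  show "m \<otimes> n \<in> centralizer_in G M T"
    if "m \<in> centralizer_in G M T" "n \<in> centralizer_in G M T" for m n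
  proof -
    have m: "m \<in> M" "\<forall>t\<in>T. m \<otimes> t = t \<otimes> m"
      and n: "n \<in> M" "\<forall>t\<in>T. n \<otimes> t = t \<otimes> n"
      using that unfolding centralizer_in_def by auto
    have "m \<otimes> n \<otimes> t = t \<otimes> (m \<otimes> n)" if t: "t \<in> T" for t
    proof -
      have c: "m \<in> carrier G" "n \<in> carrier G" "t \<in> carrier G" using m(1) n(1) t MG assms(2) by auto
      have "m \<otimes> n \<otimes> t = m \<otimes> (t \<otimes> n)" using c n(2) t by (simp add: m_assoc)
      also have "\<dots> = t \<otimes> (m \<otimes> n)" using c m(2) t by (simp add: m_assoc[symmetric])
      finally show ?thesis .
    qed
    then show ?thesis unfolding centralizer_in_def using subgroup.m_closed[OF assms(1) m(1) n(1)] by blast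
  qed
qed

lemma (in group) subgroup_set_mult_commuting:
  assumes H: "subgroup H G" and K: "subgroup K G"
    and comm: "\<And>h k. h \<in> H \<Longrightarrow> k \<in> K \<Longrightarrow> h \<otimes> k = k \<otimes> h"
  shows "subgroup (H <#> K) G"
proof (rule subgroupI)
  have HG: "H \<subseteq> carrier G" and KG: "K \<subseteq> carrier G" using H K subgroup.subset by auto
  show "H <#> K \<subseteq> carrier G" using setmult_subset_G[OF HG KG] .
  show "H <#> K \<noteq> {}"
    unfolding set_mult_def using subgroup.one_closed[OF H] subgroup.one_closed[OF K] by blast
  show "inv y \<in> H <#> K" if "y \<in> H <#> K" for y
  proof -
    obtain h k where hk: "h \<in> H" "k \<in> K" "y = h \<otimes> k" using \<open>y \<in> H <#> K\<close> unfolding set_mult_def by blast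
    have "inv y = inv k \<otimes> inv h" unfolding hk(3) using hk HG KG by (intro inv_mult_group) auto
    also have "\<dots> = inv h \<otimes> inv k"
      using comm[OF subgroup.m_inv_closed[OF H hk(1)] subgroup.m_inv_closed[OF K hk(2)]] by simp
    finally show ?thesis
      unfolding set_mult_def using subgroup.m_inv_closed[OF H hk(1)] subgroup.m_inv_closed[OF K hk(2)] by blast
  qed
  show "y \<otimes> z \<in> H <#> K" if "y \<in> H <#> K" "z \<in> H <#> K" for y z
  proof -
    obtain h k where hk: "h \<in> H" "k \<in> K" "y = h \<otimes> k" using \<open>y \<in> H <#> K\<close> unfolding set_mult_def by blast
    obtain h' k' where hk': "h' \<in> H" "k' \<in> K" "z = h' \<otimes> k'" using \<open>z \<in> H <#> K\<close> unfolding set_mult_def by blast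
    have c: "h \<in> carrier G" "k \<in> carrier G" "h' \<in> carrier G" "k' \<in> carrier G"
      using hk hk' HG KG by auto
    have "y \<otimes> z = h \<otimes> (k \<otimes> h') \<otimes> k'" using hk hk' c by (simp add: m_assoc)
    also have "\<dots> = h \<otimes> (h' \<otimes> k) \<otimes> k'" using comm[OF hk'(1) hk(2)] by simp
    also have "\<dots> = (h \<otimes> h') \<otimes> (k \<otimes> k')" using c by (simp add: m_assoc)
    finally show ?thesis
      unfolding set_mult_def using subgroup.m_closed[OF H hk(1) hk'(1)] subgroup.m_closed[OF K hk(2) hk'(2)]
      by blast
  qed
qed

lemma (in group) internal_dirprod_factor:
  assumes M: "subgroup M G" and DP: "internal_dirprod G M k Tf" and i: "i < k"
  shows "Tf i \<lhd> G\<lparr>carrier := M\<rparr>" and "Tf i \<subseteq> M" and "subgroup (Tf i) G"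
proof -
  show normal: "Tf i \<lhd> G\<lparr>carrier := M\<rparr>" using DP i unfolding internal_dirprod_def by blast
  then have "subgroup (Tf i) (G\<lparr>carrier := M\<rparr>)" by (rule normal_imp_subgroup)
  then show "Tf i \<subseteq> M" and "subgroup (Tf i) G"
    using subgroup.subset incl_subgroup[OF M] by force+
qed

lemma (in group) internal_dirprod_factors_commute:
  assumes M: "subgroup M G" and DP: "internal_dirprod G M k Tf"
    and "a < k" "b < k" "a \<noteq> b" and x: "x \<in> Tf a" and y: "y \<in> Tf b"
  shows "x \<otimes> y = y \<otimes> x"
proof -
  let ?rest = "\<Union>j\<in>{..<k} - {a}. Tf j"
  have "Tf b \<subseteq> generate G ?rest" using assms(4,5) generate.incl[of _ ?rest G] by blast
  moreover have "Tf a \<inter> generate G ?rest = {\<one>}" using DP \<open>a < k\<close> unfolding internal_dirprod_def by blast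
  ultimately have "Tf a \<inter> Tf b \<subseteq> {\<one>\<^bsub>G\<lparr>carrier := M\<rparr>\<^esub>}" by auto
  then show ?thesis
    using group.normal_imp_commuting[OF subgroup_imp_group[OF M]]
      internal_dirprod_factor(1)[OF M DP] assms(3,4) x y by fastforce
qed

lemma (in group) internal_dirprod_complement:
  assumes M: "subgroup M G" and DP: "internal_dirprod G M k Tf" and i: "i < k"
  obtains N where "subgroup N G" "Tf i \<inter> N = {\<one>}" "N \<subseteq> centralizer_in G M (Tf i)"
    "M \<subseteq> Tf i <#> N"
proof
  let ?rest = "\<Union>j\<in>{..<k} - {i}. Tf j"
  let ?N = "generate G ?rest"
  have MG: "M \<subseteq> carrier G" using M subgroup.subset by blast
  have TG: "Tf i \<subseteq> carrier G" using internal_dirprod_factor(2)[OF M DP i] MG by blast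
  have rest_M: "?rest \<subseteq> M" using internal_dirprod_factor(2)[OF M DP] by blast
  show N: "subgroup ?N G" using generate_is_subgroup rest_M MG by blast
  show "Tf i \<inter> ?N = {\<one>}" using DP i unfolding internal_dirprod_def by blast
  have "?rest \<subseteq> centralizer_in G M (Tf i)"
    unfolding centralizer_in_def
    using rest_M internal_dirprod_factors_commute[OF M DP _ i] by blast
  then show cent: "?N \<subseteq> centralizer_in G M (Tf i)"
    using generate_subgroup_incl subgroup_centralizer_in[OF M TG] by blast
  have TN: "subgroup (Tf i <#> ?N) G"
    using cent unfolding centralizer_in_def
    by (intro subgroup_set_mult_commuting[OF internal_dirprod_factor(3)[OF M DP i] N]) auto
  have "Tf j \<subseteq> Tf i <#> ?N" if "j < k" for j
  proof (cases "j = i")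
    case True
    then show ?thesis
      using TG generate.one[of G ?rest] unfolding set_mult_def by force
  next
    case False
    then have "Tf j \<subseteq> ?N" using that generate.incl[of _ ?rest G] by blast
    then show ?thesis
      using subgroup.subset[OF N] subgroup.one_closed[OF internal_dirprod_factor(3)[OF M DP i]]
      unfolding set_mult_def by force
  qed
  then have "generate G (\<Union>j<k. Tf j) \<subseteq> Tf i <#> ?N" by (intro generate_subgroup_incl[OF _ TN]) blast
  then show "M \<subseteq> Tf i <#> ?N" using DP unfolding internal_dirprod_def by blast
qed

lemma (in group) proj_factor_set_mult:
  assumes T: "subgroup T G" and N: "subgroup N G" and TN: "T \<inter> N \<subseteq> {\<one>}"
    and N_cent: "N \<subseteq> centralizer_in G M T"
    and H1: "H1 \<subseteq> T <#> N" and H2: "H2 \<subseteq> T <#> N"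
  shows "T \<inter> (H1 <#> H2) \<subseteq> proj_factor G T (centralizer_in G M T) H1 <#> proj_factor G T (centralizer_in G M T) H2"
proof
  interpret group_disjoint_sum G T N by (rule group_disjoint_sum.intro) (use T N in \<open>auto intro: group_axioms\<close>)
  fix t assume "t \<in> T \<inter> (H1 <#> H2)"
  then obtain h1 h2 where t: "t \<in> T" and h: "h1 \<in> H1" "h2 \<in> H2" "t = h1 \<otimes> h2"
    unfolding set_mult_def by blast
  obtain t1 u1 where 1: "t1 \<in> T" "u1 \<in> N" "h1 = t1 \<otimes> u1" using H1 h(1) unfolding set_mult_def by blast
  obtain t2 u2 where 2: "t2 \<in> T" "u2 \<in> N" "h2 = t2 \<otimes> u2" using H2 h(2) unfolding set_mult_def by blast
  have c: "t1 \<in> carrier G" "t2 \<in> carrier G" "u1 \<in> carrier G" "u2 \<in> carrier G"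
    using 1 2 AG.subset BG.subset by auto
  have "u1 \<otimes> t2 = t2 \<otimes> u1" using N_cent 1(2) 2(1) unfolding centralizer_in_def by blast
  moreover have "t = t1 \<otimes> (u1 \<otimes> t2) \<otimes> u2" using h(3) 1(3) 2(3) c by (simp add: m_assoc)
  ultimately have "t = t1 \<otimes> (t2 \<otimes> u1) \<otimes> u2" by simp
  then have "t = (t1 \<otimes> t2) \<otimes> (u1 \<otimes> u2)" using c by (simp add: m_assoc)
  moreover have "t = t \<otimes> \<one>" using t AG.subset by auto
  ultimately have "t1 \<otimes> t2 = t"
    using cancel[THEN iffD1, OF TN, rule_format, OF AG.m_closed[OF 1(1) 2(1)] BG.m_closed[OF 1(2) 2(2)] t BG.one_closed]
    by argo
  moreover have "t1 \<in> proj_factor G T (centralizer_in G M T) H1" "t2 \<in> proj_factor G T (centralizer_in G M T) H2"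
    unfolding proj_factor_def using 1 2 h N_cent by blast+
  ultimately show "t \<in> proj_factor G T (centralizer_in G M T) H1 <#> proj_factor G T (centralizer_in G M T) H2"
    unfolding set_mult_def by blast
qed

lemma wr_perm_apply:
  assumes "x \<in> prod_space l D" and "i \<in> {1..l}"
  shows "wr_perm l D g h x i = g (inv_into UNIV h i) (x (inv_into UNIV h i))"
  using assms unfolding wr_perm_def by simp

lemma wr_perm_determines_perm:
  assumes D: "card D \<ge> 2" and gh: "(g, h) \<in> wr_data l D" and gh': "(g', h') \<in> wr_data l D"
    and eq: "wr_perm l D g h = wr_perm l D g' h'"
  shows "h = h'"
proof -
  obtain d1 d2 where d: "d1 \<in> D" "d2 \<in> D" "d1 \<noteq> d2"
    using D by (metis One_nat_def Suc_1 card_le_Suc_iff insert_iff not_one_le_zero card.empty equals0I)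
  have h: "h permutes {1..l}" and h': "h' permutes {1..l}" and g: "\<forall>i\<in>{1..l}. inj_on (g i) D"
    using gh gh' bij_betw_imp_inj_on unfolding wr_data_def by auto
  have "inv_into UNIV h i = inv_into UNIV h' i" for i
  proof (cases "i \<in> {1..l}")
    case False
    then show ?thesis using permutes_not_in[OF permutes_inv[OF h]] permutes_not_in[OF permutes_inv[OF h']]
      by simp
  next
    case i: True
    let ?a = "inv_into UNIV h i" and ?b = "inv_into UNIV h' i"
    show ?thesis
    proof (rule ccontr)
      assume ab: "?a \<noteq> ?b"
      have a: "?a \<in> {1..l}" and b: "?b \<in> {1..l}"
        using i permutes_in_image[OF permutes_inv[OF h]] permutes_in_image[OF permutes_inv[OF h']] by auto
      \<comment> \<open>Coordinate \<open>i\<close> of the image depends on coordinate \<open>?a\<close> under \<open>(g, h)\<close>, on \<open>?b\<close> under \<open>(g', h')\<close>.\<close>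
      define x where "x = (\<lambda>_\<in>{1..l}. d1)"
      define y where "y = x(?a := d2)"
      have x: "x \<in> prod_space l D" and y: "y \<in> prod_space l D"
        using d a unfolding x_def y_def prod_space_def by auto
      have "g ?a d1 = wr_perm l D g h x i" using wr_perm_apply[OF x i] a by (simp add: x_def)
      also have "\<dots> = g' ?b d1" using wr_perm_apply[OF x i] b by (simp add: eq x_def)
      also have "\<dots> = wr_perm l D g' h' y i" using wr_perm_apply[OF y i] ab b by (simp add: x_def y_def)
      also have "\<dots> = g ?a d2" using wr_perm_apply[OF y i] by (simp add: eq[symmetric] y_def)
      finally have "g ?a d1 = g ?a d2" .
      moreover have "inj_on (g ?a) D" using g a by blast
      ultimately show False using inj_onD d by metis
    qed
  qed
  then have "inv_into UNIV h = inv_into UNIV h'" by (rule ext)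
  then show ?thesis using permutes_inv_inv[OF h] permutes_inv_inv[OF h'] by metis
qed

lemma wr_proj_wr_perm:
  assumes "card D \<ge> 2" and "(g, h) \<in> wr_data l D"
  shows "wr_proj l D (wr_perm l D g h) = h"
  unfolding wr_proj_def
  using assms wr_perm_determines_perm by (intro the_equality) blast+

lemma wr_base_coord_eq:
  assumes "card D \<ge> 2" and w: "w \<in> wr_base l D"
    and x: "x \<in> prod_space l D" and y: "y \<in> prod_space l D" and i: "i \<in> {1..l}" and "x i = y i"
  shows "w x i = w y i"
proof -
  obtain g h where gh: "(g, h) \<in> wr_data l D" and w_eq: "w = wr_perm l D g h"
    using w unfolding wr_base_def wreath_def by blast
  have "h = id" using w wr_proj_wr_perm[OF assms(1) gh] unfolding wr_base_def w_eq by simp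
  then show ?thesis using wr_perm_apply[OF x i] wr_perm_apply[OF y i] \<open>x i = y i\<close>
    unfolding w_eq by (simp add: inv_id)
qed

lemma component_stab_preimage_wr_base:
  assumes "H \<subseteq> wr_base l D" and "\<delta> \<in> D"
  shows "component_stab_preimage l D H j \<delta> = {m \<in> H. m (\<lambda>_\<in>{1..l}. \<delta>) j = \<delta>}"
  using assms unfolding component_stab_preimage_def wr_coord_def wr_base_def wr_stab_def by auto

lemma wr_base_transitive_factor:
  assumes D: "card D \<ge> 2" and M: "subgroup M (BijGroup (prod_space l D))" and M_base: "M \<subseteq> wr_base l D"
    and M_trans: "\<forall>x\<in>prod_space l D. \<forall>y\<in>prod_space l D. \<exists>m\<in>M. m x = y"
    and m: "m \<in> M" and \<omega>: "\<omega> \<in> prod_space l D" and j0: "j0 \<in> {1..l}"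
  obtains a b where "a \<in> M" "b \<in> M" "m = a \<otimes>\<^bsub>BijGroup (prod_space l D)\<^esub> b"
    "a \<omega> j0 = \<omega> j0" "\<forall>i\<in>{1..l} - {j0}. b \<omega> i = \<omega> i"
proof -
  let ?S = "BijGroup (prod_space l D)"
  interpret S: group ?S by (rule group_BijGroup)
  have MS: "M \<subseteq> Bij (prod_space l D)" using subgroup.subset[OF M] unfolding BijGroup_def by simp
  then have "bij_betw m (prod_space l D) (prod_space l D)" using m unfolding Bij_def by blast
  then have "m ` prod_space l D = prod_space l D" by (rule bij_betw_imp_surj_on)
  then obtain q where q: "q \<in> prod_space l D" "m q = \<omega>" using \<omega> by (metis imageE)
  \<comment> \<open>\<open>b\<close> moves \<open>p\<close> to \<open>\<omega>\<close>; as \<open>p\<close> agrees with \<open>\<omega>\<close> off \<open>j0\<close> and with \<open>m\<^sup>-\<^sup>1 \<omega>\<close> at \<open>j0\<close>, \<open>b\<close> and \<open>a = m b\<^sup>-\<^sup>1\<close> fix the required coordinates.\<close>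
  define p where "p = \<omega>(j0 := q j0)"
  have "q j0 \<in> D" using q(1) j0 unfolding prod_space_def by auto
  then have p: "p \<in> prod_space l D"
    using PiE_fun_upd[of "q j0" "\<lambda>_. D" j0 \<omega> "{1..l}"] \<omega> j0 unfolding p_def prod_space_def
    by (simp add: insert_absorb)
  obtain b where b: "b \<in> M" "b p = \<omega>" using M_trans p \<omega> by blast
  define a where "a = m \<otimes>\<^bsub>?S\<^esub> inv\<^bsub>?S\<^esub> b"
  have a: "a \<in> M" unfolding a_def by (rule subgroup.m_closed[OF M m subgroup.m_inv_closed[OF M b(1)]])
  have "m \<in> carrier ?S" "b \<in> carrier ?S" using m b(1) subgroup.subset[OF M] by auto
  then have mab: "m = a \<otimes>\<^bsub>?S\<^esub> b" unfolding a_def by (simp add: S.m_assoc)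
  have "m p = a \<omega>"
  proof -
    have "a \<otimes>\<^bsub>?S\<^esub> b = compose (prod_space l D) a b" using a b(1) MS unfolding BijGroup_def by auto
    then show ?thesis using mab p b(2) unfolding compose_def by simp
  qed
  moreover have "m p j0 = m q j0"
    using wr_base_coord_eq[OF D _ p q(1) j0] m M_base unfolding p_def by auto
  ultimately have "a \<omega> j0 = \<omega> j0" using q(2) by simp
  moreover have "b \<omega> i = \<omega> i" if "i \<in> {1..l} - {j0}" for i
    using wr_base_coord_eq[OF D _ \<omega> p, of b i] b M_base that unfolding p_def by auto
  ultimately show ?thesis using that a b(1) mab by blast
qed

lemma wr_base_transitive_set_mult:
  assumes D: "card D \<ge> 2" and M: "subgroup M (BijGroup (prod_space l D))" and M_base: "M \<subseteq> wr_base l D"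
    and M_trans: "\<forall>x\<in>prod_space l D. \<forall>y\<in>prod_space l D. \<exists>m\<in>M. m x = y"
    and \<delta>: "\<delta> \<in> D" and j0: "j0 \<in> {1..l}" and J: "J \<subseteq> {1..l} - {j0}"
  shows "M \<subseteq> component_stab_preimage l D M j0 \<delta> <#>\<^bsub>BijGroup (prod_space l D)\<^esub>
                 (M \<inter> (\<Inter>j\<in>J. component_stab_preimage l D M j \<delta>))"
proof
  let ?\<omega> = "\<lambda>_\<in>{1..l}. \<delta>"
  fix m assume "m \<in> M"
  have "?\<omega> \<in> prod_space l D" using \<delta> unfolding prod_space_def by auto
  then obtain a b where ab: "a \<in> M" "b \<in> M" "m = a \<otimes>\<^bsub>BijGroup (prod_space l D)\<^esub> b"
    "a ?\<omega> j0 = ?\<omega> j0" "\<forall>i\<in>{1..l} - {j0}. b ?\<omega> i = ?\<omega> i"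
    by (rule wr_base_transitive_factor[OF D M M_base M_trans \<open>m \<in> M\<close> _ j0])
  have "a \<in> component_stab_preimage l D M j0 \<delta>"
    using ab(1,4) j0 unfolding component_stab_preimage_wr_base[OF M_base \<delta>] by simp
  moreover have "b \<in> M \<inter> (\<Inter>j\<in>J. component_stab_preimage l D M j \<delta>)"
    using ab(2,5) J unfolding component_stab_preimage_wr_base[OF M_base \<delta>] by auto
  ultimately show "m \<in> component_stab_preimage l D M j0 \<delta> <#>\<^bsub>BijGroup (prod_space l D)\<^esub>
                 (M \<inter> (\<Inter>j\<in>J. component_stab_preimage l D M j \<delta>))"
    unfolding set_mult_def using ab(3) by blast
qed

lemma wr_base_transitive_proj_set_mult:
  fixes l :: nat and D :: "'d set"
  defines "S \<equiv> BijGroup (prod_space l D)"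
  assumes D: "card D \<ge> 2" and M: "subgroup M S" and M_base: "M \<subseteq> wr_base l D"
    and M_trans: "\<forall>x\<in>prod_space l D. \<forall>y\<in>prod_space l D. \<exists>m\<in>M. m x = y"
    and \<delta>: "\<delta> \<in> D" and j0: "j0 \<in> {1..l}" and J: "J \<subseteq> {1..l} - {j0}"
    and T: "subgroup T S" and N: "subgroup N S" and TN: "T \<inter> N \<subseteq> {\<one>\<^bsub>S\<^esub>}"
    and N_cent: "N \<subseteq> centralizer_in S M T" and T_M: "T \<subseteq> M" and M_TN: "M \<subseteq> T <#>\<^bsub>S\<^esub> N"
  shows "T \<subseteq> proj_factor S T (centralizer_in S M T) (component_stab_preimage l D M j0 \<delta>) <#>\<^bsub>S\<^esub>
              proj_factor S T (centralizer_in S M T) (M \<inter> (\<Inter>j\<in>J. component_stab_preimage l D M j \<delta>))"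
proof -
  interpret S: group S unfolding S_def by (rule group_BijGroup)
  let ?H = "component_stab_preimage l D M j0 \<delta>"
  let ?K = "M \<inter> (\<Inter>j\<in>J. component_stab_preimage l D M j \<delta>)"
  have "?H \<subseteq> M" "?K \<subseteq> M" unfolding component_stab_preimage_def by auto
  then have HK: "?H \<subseteq> T <#>\<^bsub>S\<^esub> N" "?K \<subseteq> T <#>\<^bsub>S\<^esub> N" using M_TN by auto
  have "T \<subseteq> T \<inter> (?H <#>\<^bsub>S\<^esub> ?K)"
    using T_M wr_base_transitive_set_mult[OF D M[unfolded S_def] M_base M_trans \<delta> j0 J]
    unfolding S_def by auto
  also have "\<dots> \<subseteq> proj_factor S T (centralizer_in S M T) ?H <#>\<^bsub>S\<^esub> proj_factor S T (centralizer_in S M T) ?K"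
    by (rule S.proj_factor_set_mult[OF T N TN N_cent HK])
  finally show ?thesis .
qed

theorem lemma2p4:
  fixes D :: "'d set" and l :: nat
    and G M :: "((nat \<Rightarrow> 'd) \<Rightarrow> (nat \<Rightarrow> 'd)) set"
    and k :: nat and Tf :: "nat \<Rightarrow> ((nat \<Rightarrow> 'd) \<Rightarrow> (nat \<Rightarrow> 'd)) set"
    and T :: "((nat \<Rightarrow> 'd) \<Rightarrow> (nat \<Rightarrow> 'd)) set"
    and s :: nat and j :: "nat \<Rightarrow> nat" and \<delta> :: 'd
  defines "\<Omega> \<equiv> prod_space l D"
  defines "Sym\<Omega> \<equiv> BijGroup (prod_space l D)"
  defines "Tbar \<equiv> centralizer_in (BijGroup (prod_space l D)) M T"
  defines "\<omega> \<equiv> (\<lambda>i\<in>{1..l}. \<delta>)"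
  defines "A \<equiv> (\<lambda>r. proj_factor (BijGroup (prod_space l D)) T Tbar
                     (component_stab_preimage l D M (j r) \<delta>))"
  assumes "finite D" and "card D \<ge> 2" and "l \<ge> 2"
    and G_sub: "subgroup G Sym\<Omega>" and G_W: "G \<subseteq> wreath l D"
    and M_min: "minimal_normal (Sym\<Omega>\<lparr>carrier := G\<rparr>) M"
    and M_trans: "\<forall>x\<in>\<Omega>. \<forall>y\<in>\<Omega>. \<exists>m\<in>M. m x = y"
    and M_base: "M \<subseteq> wr_base l D"
    and M_prod: "internal_dirprod Sym\<Omega> M k Tf"
    and T_simple: "\<forall>i<k. simple_group (Sym\<Omega>\<lparr>carrier := Tf i\<rparr>)"
    and T_nonab: "\<forall>i<k. \<not> comm_group (Sym\<Omega>\<lparr>carrier := Tf i\<rparr>)"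
    and T_iso: "\<forall>i<k. \<forall>i'<k. Sym\<Omega>\<lparr>carrier := Tf i\<rparr> \<cong> Sym\<Omega>\<lparr>carrier := Tf i'\<rparr>"
    and T_factor: "T \<in> Tf ` {..<k}"
    and j_inj: "inj_on j {1..s}" and j_range: "j ` {1..s} \<subseteq> {1..l}"
    and T_comp: "\<forall>r\<in>{1..s}. \<not> T \<subseteq> component_kernel l D M (j r)"
    and "\<delta> \<in> D"
  shows "(\<forall>r\<in>{1..s}. A r <#>\<^bsub>Sym\<Omega>\<^esub> (T \<inter> (\<Inter>i\<in>{1..s} - {r}. A i)) = T)
       \<and> proj_factor Sym\<Omega> T Tbar {m \<in> M. m \<omega> = \<omega>} \<subseteq> T \<inter> (\<Inter>r\<in>{1..s}. A r)"
proof -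
  interpret S: group Sym\<Omega> unfolding Sym\<Omega>_def by (rule group_BijGroup)
  have "M \<lhd> Sym\<Omega>\<lparr>carrier := G\<rparr>" using M_min unfolding minimal_normal_def by blast
  then have M: "subgroup M Sym\<Omega>" by (intro S.incl_subgroup[OF G_sub] normal_imp_subgroup)
  obtain i0 where i0: "i0 < k" and T_eq: "T = Tf i0" using T_factor by blast
  note T_factor = S.internal_dirprod_factor[OF M M_prod i0, folded T_eq]
  obtain N where N: "subgroup N Sym\<Omega>" "T \<inter> N = {\<one>\<^bsub>Sym\<Omega>\<^esub>}" "N \<subseteq> centralizer_in Sym\<Omega> M T"
      "M \<subseteq> T <#>\<^bsub>Sym\<Omega>\<^esub> N"
    by (rule S.internal_dirprod_complement[OF M M_prod i0, folded T_eq])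
  have TN: "T \<inter> N \<subseteq> {\<one>\<^bsub>Sym\<Omega>\<^esub>}" using N(2) by simp
  define C where "C r = component_stab_preimage l D M (j r) \<delta>" for r
  have A: "A r = proj_factor Sym\<Omega> T Tbar (C r)" for r unfolding A_def C_def Sym\<Omega>_def ..
  have A_T: "A r \<subseteq> T" for r unfolding A proj_factor_def by blast
  have jr: "j r \<in> {1..l}" if "r \<in> {1..s}" for r using j_range that by blast
  have "A r <#>\<^bsub>Sym\<Omega>\<^esub> (T \<inter> (\<Inter>i\<in>{1..s} - {r}. A i)) = T" if r: "r \<in> {1..s}" for r
  proof
    have "A r <#>\<^bsub>Sym\<Omega>\<^esub> (T \<inter> (\<Inter>i\<in>{1..s} - {r}. A i)) \<subseteq> T <#>\<^bsub>Sym\<Omega>\<^esub> T"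
      using A_T by (intro mono_set_mult) auto
    then show "A r <#>\<^bsub>Sym\<Omega>\<^esub> (T \<inter> (\<Inter>i\<in>{1..s} - {r}. A i)) \<subseteq> T"
      using S.subgroup_mult_id[OF T_factor(3)] by simp
    have "j ` ({1..s} - {r}) \<subseteq> {1..l} - {j r}" using inj_onD[OF j_inj] j_range r by fastforce
    from wr_base_transitive_proj_set_mult[OF \<open>card D \<ge> 2\<close> M[unfolded Sym\<Omega>_def] M_base
        M_trans[unfolded \<Omega>_def] \<open>\<delta> \<in> D\<close> jr[OF r] this T_factor(3)[unfolded Sym\<Omega>_def]
        N(1)[unfolded Sym\<Omega>_def] TN[unfolded Sym\<Omega>_def]
        N(3)[unfolded Sym\<Omega>_def] T_factor(2) N(4)[unfolded Sym\<Omega>_def]]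
    have "T \<subseteq> A r <#>\<^bsub>Sym\<Omega>\<^esub> proj_factor Sym\<Omega> T Tbar (M \<inter> (\<Inter>i\<in>{1..s} - {r}. C i))"
      unfolding A C_def Sym\<Omega>_def Tbar_def by simp
    also have "\<dots> \<subseteq> A r <#>\<^bsub>Sym\<Omega>\<^esub> (T \<inter> (\<Inter>i\<in>{1..s} - {r}. A i))"
      by (rule mono_set_mult) (auto simp: A proj_factor_def)
    finally show "T \<subseteq> A r <#>\<^bsub>Sym\<Omega>\<^esub> (T \<inter> (\<Inter>i\<in>{1..s} - {r}. A i))" .
  qed
  moreover have "{m \<in> M. m \<omega> = \<omega>} \<subseteq> C r" if "r \<in> {1..s}" for r
    using jr[OF that] unfolding C_def component_stab_preimage_wr_base[OF M_base \<open>\<delta> \<in> D\<close>] \<omega>_def by auto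
  then have "proj_factor Sym\<Omega> T Tbar {m \<in> M. m \<omega> = \<omega>} \<subseteq> T \<inter> (\<Inter>r\<in>{1..s}. A r)"
    unfolding A proj_factor_def by blast
  ultimately show ?thesis by blast
qed

end
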